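(* Fix integers $1\le N_c\le N_f$, Zipf exponent $\delta>0$ with $p_f=f^{-\delta}/\sum_{n=1}^{N_f}n^{-\delta}$, and parameters $\alpha>2$, integer $M_1\ge1$, $\lambda_{12},P_{12},B_{12}>0$. For $x>0$ define $\mathsf C_1(x)=\lambda_{12}(P_{12}B_{12})^{2/\alpha}{}_2F_1[-\tfrac2\alpha,M_1;1-\tfrac2\alpha;-\tfrac{x}{M_1B_{12}}]$, $\mathsf C_2(x)=\Gamma(1-\tfrac2\alpha)\Gamma(1+\tfrac2\alpha)x^{2/\alpha}$, $\mathsf C_3(x)={}_2F_1[-\tfrac2\alpha,1;1-\tfrac2\alpha;-x]-\mathsf C_2(x)-1$, and let $\underline{\mathbf q}^*(x)$ be the maximizer over $\{\mathbf q\in[0,1]^{N_f}:\sum_fq_f\le N_c\}$ of the high-user-density lower bound $$\underline p_{{\rm s},2}(\mathbf q;x)=\sum_{f=1}^{N_f}\frac{p_fq_f}{\mathsf C_1(x)+\mathsf C_2(x)+(\mathsf C_3(x)+1)q_f},$$ given by $\underline q^*_f(x)=\Big[\frac{\sqrt{\mathsf C_1(x)+\mathsf C_2(x)}}{\sqrt\nu(\mathsf C_3(x)+1)}\sqrt{p_f}-\frac{\mathsf C_1(x)+\mathsf C_2(x)}{\mathsf C_3(x)+1}\Big]_0^1$ with $\nu>0$ such that $\sum_f\underline q^*_f(x)=N_c$. Let $x=\bar\gamma=2^{\frac{R_0}{W}(1+1.28\frac{\lambda_u}{\lambda_2}\mathcal P^o)}-1$ with $W>0$ and $\mathcal P^o>0$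 fixed. Then as $R_0\to\infty$ (all other parameters fixed), and also as $\lambda_u/\lambda_2\to\infty$ (all other parameters, including $R_0>0$, fixed), $$\underline q^*_f(\bar\gamma)\to1\ \text{ for }f=1,\dots,N_c,\qquad \underline q^*_f(\bar\gamma)\to0\ \text{ for }f=N_c+1,\dots,N_f.$$
   Context: $[x]_0^1=\max\{\min\{x,1\},0\}$; ${}_2F_1$ is the Gauss hypergeometric function, $\Gamma$ the Gamma function. $R_0$ is the per-user rate requirement, $W$ the bandwidth, $\lambda_u/\lambda_2$ the user-to-helper density ratio, $\mathcal P^o$ the maximal helper-tier association probability; $\lambda_{12}=\lambda_1/\lambda_2$, $P_{12}=P_1/P_2$, $B_{12}=B_1/B_2$. In the high-user-density regime all helpers are active. The conclusion means that caching the $N_c$ most popular files at every helper becomes optimal. *)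

theory Defs
  imports "HOL-Analysis.Analysis"
begin

definition hyp2f1_series :: "real \<Rightarrow> real \<Rightarrow> real \<Rightarrow> real \<Rightarrow> real" where
  "hyp2f1_series a b c z =
     (\<Sum>n. pochhammer a n * pochhammer b n / pochhammer c n * z ^ n / fact n)"

text \<open>Gauss hypergeometric function 2F1[a,b;c;z] on the real axis: the power series for
  abs z < 1, and for z \<le> -1 its analytic continuation given by the Pfaff transformation
  2F1[a,b;c;z] = (1-z)^(-a) 2F1[a,c-b;c;z/(z-1)] (the argument z/(z-1) lies in [1/2,1)).
  Only arguments z < 0 are used below.\<close>
definition hyp2f1 :: "real \<Rightarrow> real \<Rightarrow> real \<Rightarrow> real \<Rightarrow> real" where
  "hyp2f1 a b c z =
     (if \<bar>z\<bar> < 1 then hyp2f1_series a b c z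
      else (1 - z) powr (- a) * hyp2f1_series a (c - b) c (z / (z - 1)))"

definition clip01 :: "real \<Rightarrow> real" where
  "clip01 x = max (min x 1) 0"

definition zipf :: "nat \<Rightarrow> real \<Rightarrow> nat \<Rightarrow> real" where
  "zipf Nf \<delta> f = real f powr (- \<delta>) / (\<Sum>n = 1..Nf. real n powr (- \<delta>))"

definition C1 :: "real \<Rightarrow> nat \<Rightarrow> real \<Rightarrow> real \<Rightarrow> real \<Rightarrow> real \<Rightarrow> real" where
  "C1 \<alpha> M1 lam12 P12 B12 x =
     lam12 * (P12 * B12) powr (2 / \<alpha>) *
     hyp2f1 (- 2 / \<alpha>) (real M1) (1 - 2 / \<alpha>) (- x / (real M1 * B12))"

definition C2 :: "real \<Rightarrow> real \<Rightarrow> real" where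
  "C2 \<alpha> x = Gamma (1 - 2 / \<alpha>) * Gamma (1 + 2 / \<alpha>) * x powr (2 / \<alpha>)"

definition C3 :: "real \<Rightarrow> real \<Rightarrow> real" where
  "C3 \<alpha> x = hyp2f1 (- 2 / \<alpha>) 1 (1 - 2 / \<alpha>) (- x) - C2 \<alpha> x - 1"

definition qlow :: "nat \<Rightarrow> real \<Rightarrow> real \<Rightarrow> nat \<Rightarrow> real \<Rightarrow> real \<Rightarrow> real \<Rightarrow> real \<Rightarrow> real \<Rightarrow> nat \<Rightarrow> real" where
  "qlow Nf \<delta> \<alpha> M1 lam12 P12 B12 x \<nu> f =
     (let A = C1 \<alpha> M1 lam12 P12 B12 x + C2 \<alpha> x; D = C3 \<alpha> x + 1 in
      clip01 (sqrt A / (sqrt \<nu> * D) * sqrt (zipf Nf \<delta> f) - A / D))"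

text \<open>SINR threshold gamma-bar; rho = lambda_u / lambda_2.\<close>
definition gbar :: "real \<Rightarrow> real \<Rightarrow> real \<Rightarrow> real \<Rightarrow> real" where
  "gbar W Po R0 \<rho> = 2 powr (R0 / W * (1 + 1.28 * \<rho> * Po)) - 1"

end

theory Submission
  imports Defs "HOL-Real_Asymp.Multiseries_Expansion"
begin

text \<open>Write d = 2/\<alpha> \<in> (0,1). By the Pfaff transformation both hypergeometric terms are
  (1-z)^d H(w) with H(w) = 2F1[-d,-e;1-d;w] and w = z/(z-1) \<in> (0,1), and H satisfies
  w H' - d H = -d (1-w)^e. From this ODE, H \<ge> 1 for e \<ge> 0 (so C1 \<ge> 0), and for e = d the
  function (H(t) - (1-t)^d) t^(-d) is d times the incomplete Beta integral of
  t^(-d) (1-t)^(d-1), whose total value is d B(1-d,d) = \<Gamma>(1-d) \<Gamma>(1+d). Comparing with it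
  shows 0 < C3(x) + 1 < 1 for x \<ge> 1. Hence the offset (C1 + C2)/(C3 + 1) \<ge> C2(x), which
  grows like x^d, tends to infinity. In the clipped solution q_f = [s \<surd>p_f - K]_0^1 a large
  offset K leaves room for at most one fractional entry, and the constraint \<Sigma> q_f = Nc then
  forces q_f = 1 for the Nc most popular files and 0 for the rest. Finally the
  threshold 2^(\<dots>) - 1 tends to infinity in both limits.\<close>

section \<open>The series 2F1[-d,-e;1-d;w]\<close>

text \<open>(-d)_n / (1-d)_n = -d / (n-d) and (-e)_n / n! = (-1)^n (e choose n).\<close>
definition hyp_coeff :: "real \<Rightarrow> real \<Rightarrow> nat \<Rightarrow> real" where
  "hyp_coeff d e n = (- d / (real n - d)) * ((e gchoose n) * (-1) ^ n)"

definition hyp_fun :: "real \<Rightarrow> real \<Rightarrow> real \<Rightarrow> real" where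
  "hyp_fun d e w = (\<Sum>n. hyp_coeff d e n * w ^ n)"

definition hyp_fun_deriv :: "real \<Rightarrow> real \<Rightarrow> real \<Rightarrow> real" where
  "hyp_fun_deriv d e w = (\<Sum>n. diffs (hyp_coeff d e) n * w ^ n)"

lemma hyp2f1_term_eq_hyp_coeff:
  assumes "0 < d" "d < 1"
  shows "pochhammer (-d) n * pochhammer (-e) n / pochhammer (1 - d) n * w ^ n / fact n
           = hyp_coeff d e n * w ^ n"
proof -
  have p0: "pochhammer (1 - d) n \<noteq> 0"
    using assms by (auto simp: pochhammer_eq_0_iff)
  have nd: "real n - d \<noteq> 0" using assms by (cases n) auto
  have "pochhammer (-d) (Suc n) = (-d + real n) * pochhammer (-d) n"
    by (rule pochhammer_rec')
  moreover have "pochhammer (-d) (Suc n) = (-d) * pochhammer (-d + 1) n"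
    by (rule pochhammer_rec)
  ultimately have "pochhammer (-d) n / pochhammer (1 - d) n = - d / (real n - d)"
    using p0 nd by (simp add: field_simps)
  moreover have "pochhammer (-e) n / fact n = (e gchoose n) * (-1) ^ n"
    by (simp add: gbinomial_pochhammer)
  ultimately show ?thesis unfolding hyp_coeff_def
    by (metis (no_types, lifting) times_divide_eq_left times_divide_eq_right mult.commute
        mult.assoc)
qed

lemma hyp2f1_series_eq_hyp_fun:
  assumes "0 < d" "d < 1"
  shows "hyp2f1_series (-d) (-e) (1 - d) w = hyp_fun d e w"
  unfolding hyp2f1_series_def hyp_fun_def using hyp2f1_term_eq_hyp_coeff[OF assms] by simp

lemma gen_binomial_real_minus:
  fixes w :: real
  assumes "\<bar>w\<bar> < 1"
  shows "(\<lambda>n. (e gchoose n) * (-1) ^ n * w ^ n) sums ((1 - w) powr e)"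
proof -
  have "(\<lambda>n. (e gchoose n) * (-w) ^ n) sums ((1 + - w) powr e)"
    by (rule gen_binomial_real) (use assms in simp)
  moreover have "(\<lambda>n. (e gchoose n) * (-w) ^ n) = (\<lambda>n. (e gchoose n) * (-1) ^ n * w ^ n)"
    by (rule ext, subst power_minus, rule mult.assoc[symmetric])
  ultimately show ?thesis by simp
qed

lemma summable_hyp_coeff:
  fixes w :: real
  assumes "0 < d" "d < 1" "\<bar>w\<bar> < 1"
  shows "summable (\<lambda>n. hyp_coeff d e n * w ^ n)"
proof -
  define K where "K = (\<bar>w\<bar> + 1) / 2"
  have K: "\<bar>w\<bar> < K" "K < 1" using assms by (auto simp: K_def)
  have "summable (\<lambda>n. (e gchoose n) * (-1) ^ n * K ^ n)"
    using gen_binomial_real_minus[of K e] K by (auto simp: sums_iff)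
  then have binom: "summable (\<lambda>n. norm ((e gchoose n) * (-1) ^ n * w ^ n))"
    using powser_insidea[of "\<lambda>n. (e gchoose n) * (-1) ^ n" K w] K by simp
  have ratio: "\<bar>- d / (real n - d)\<bar> \<le> 1 + d / (1 - d)" for n
  proof (cases n)
    case (Suc m)
    then have "d / (real n - d) \<le> d / (1 - d)" and "real n - d > 0"
      using assms by (auto intro!: divide_left_mono)
    then show ?thesis using assms by simp
  qed (use assms in simp)
  show ?thesis
  proof (rule summable_comparison_test)
    show "\<exists>N. \<forall>n\<ge>N. norm (hyp_coeff d e n * w ^ n)
            \<le> (1 + d / (1 - d)) * norm ((e gchoose n) * (-1) ^ n * w ^ n)"
      unfolding hyp_coeff_def norm_mult abs_mult real_norm_def
      by (metis mult.assoc abs_ge_zero mult_right_mono ratio)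
    show "summable (\<lambda>n. (1 + d / (1 - d)) * norm ((e gchoose n) * (-1) ^ n * w ^ n))"
      using binom by (rule summable_mult)
  qed
qed

lemma hyp_fun_has_derivative:
  fixes w :: real
  assumes "0 < d" "d < 1" "\<bar>w\<bar> < 1"
  shows "(hyp_fun d e has_field_derivative hyp_fun_deriv d e w) (at w)"
  unfolding hyp_fun_def hyp_fun_deriv_def
  by (rule termdiffs_strong'[where K=1]) (use assms summable_hyp_coeff in auto)

lemma hyp_fun_0: "d > 0 \<Longrightarrow> hyp_fun d e 0 = 1"
  unfolding hyp_fun_def by (subst powser_zero) (simp add: hyp_coeff_def)

lemma hyp_fun_ode:
  fixes w :: real
  assumes "0 < d" "d < 1" "\<bar>w\<bar> < 1"
  shows "w * hyp_fun_deriv d e w - d * hyp_fun d e w = - d * (1 - w) powr e"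
proof -
  define c where "c = hyp_coeff d e"
  define g where "g n = real n * c n * w ^ n" for n
  have "summable (\<lambda>n. diffs c n * w ^ n)"
    unfolding c_def by (rule termdiff_converges[where K=1]) (use assms summable_hyp_coeff in auto)
  then have "(\<lambda>n. diffs c n * w ^ n * w) sums (hyp_fun_deriv d e w * w)"
    unfolding hyp_fun_deriv_def c_def by (intro sums_mult2 summable_sums)
  moreover have "(\<lambda>n. diffs c n * w ^ n * w) = (\<lambda>n. g (Suc n))"
    by (auto simp: g_def diffs_def fun_eq_iff)
  ultimately have "(\<lambda>n. g (Suc n)) sums (hyp_fun_deriv d e w * w)" by simp
  then have g_sums: "g sums (hyp_fun_deriv d e w * w)"
    by (subst (asm) sums_Suc_iff) (simp add: g_def)
  have "(\<lambda>n. c n * w ^ n) sums hyp_fun d e w"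
    unfolding hyp_fun_def c_def using summable_hyp_coeff[OF assms] by (intro summable_sums)
  then have "(\<lambda>n. g n - d * (c n * w ^ n)) sums (hyp_fun_deriv d e w * w - d * hyp_fun d e w)"
    by (intro sums_diff g_sums sums_mult)
  moreover have "g n - d * (c n * w ^ n) = (-d) * ((e gchoose n) * (-1) ^ n * w ^ n)" for n
  proof -
    have "real n - d \<noteq> 0" using assms by (cases n) auto
    then have "(real n - d) * c n = (-d) * ((e gchoose n) * (-1) ^ n)"
      unfolding c_def hyp_coeff_def by simp
    moreover have "g n - d * (c n * w ^ n) = (real n - d) * c n * w ^ n"
      unfolding g_def by (simp add: algebra_simps)
    ultimately show ?thesis by simp
  qed
  ultimately have "(\<lambda>n. (-d) * ((e gchoose n) * (-1) ^ n * w ^ n))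
                     sums (hyp_fun_deriv d e w * w - d * hyp_fun d e w)"
    by simp
  moreover have "(\<lambda>n. (-d) * ((e gchoose n) * (-1) ^ n * w ^ n)) sums ((-d) * (1 - w) powr e)"
    by (intro sums_mult gen_binomial_real_minus assms)
  ultimately show ?thesis by (metis sums_unique2 mult.commute)
qed

lemma vanishing_mult_powr_tendsto_0:
  fixes g :: "real \<Rightarrow> real"
  assumes "d < 1" "g 0 = 0" "(g has_field_derivative g') (at 0)"
  shows "((\<lambda>w. g w * w powr (-d)) \<longlongrightarrow> 0) (at_right 0)"
proof -
  have "((\<lambda>w. g w / w) \<longlongrightarrow> g') (at 0)"
    using assms(2,3) by (simp add: has_field_derivative_iff)
  then have quot: "((\<lambda>w. g w / w) \<longlongrightarrow> g') (at_right 0)"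
    by (rule tendsto_within_subset) auto
  have "((\<lambda>w. w powr (1 - d)) \<longlongrightarrow> 0) (at_right 0)"
    by (rule tendsto_zero_powrI[OF tendsto_ident_at tendsto_const])
       (use assms in \<open>auto intro: eventually_at_rightI[where b=1]\<close>)
  from tendsto_mult[OF quot this]
  have "((\<lambda>w. g w / w * w powr (1 - d)) \<longlongrightarrow> 0) (at_right 0)" by simp
  moreover have "\<forall>\<^sub>F w in at_right 0. g w / w * w powr (1 - d) = g w * w powr (-d)"
    by (rule eventually_at_rightI[where b=1]) (auto simp: powr_diff powr_minus_divide)
  ultimately show ?thesis by (rule Lim_transform_eventually)
qed

lemma hyp_fun_ge_1:
  assumes "0 < d" "d < 1" "0 \<le> e" "0 < w" "w < 1"
  shows "1 \<le> hyp_fun d e w"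
proof -
  define \<psi> where "\<psi> t = (hyp_fun d e t - 1) * t powr (-d)" for t
  have \<psi>_deriv: "(\<psi> has_field_derivative t powr (-d-1) * (d * (1 - (1 - t) powr e))) (at t)"
    if t: "0 < t" "t < 1" for t
  proof -
    have tp: "t powr (-d) = t * t powr (-d-1)" using t by (simp add: powr_diff)
    have deriv: "(\<psi> has_field_derivative
             (hyp_fun_deriv d e t - 0) * t powr (-d) + (-d * t powr (-d-1)) * (hyp_fun d e t - 1))
            (at t)"
      unfolding \<psi>_def
      by (intro DERIV_mult DERIV_diff hyp_fun_has_derivative DERIV_const
          has_real_derivative_powr) (use assms t in auto)
    have ode: "t * hyp_fun_deriv d e t - d * hyp_fun d e t = - d * (1 - t) powr e"
      by (rule hyp_fun_ode) (use assms t in auto)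
    have "(hyp_fun_deriv d e t - 0) * t powr (-d) + (-d * t powr (-d-1)) * (hyp_fun d e t - 1)
        = t powr (-d-1) * (t * hyp_fun_deriv d e t - d * hyp_fun d e t + d)"
      unfolding tp by (simp add: algebra_simps)
    also have "\<dots> = t powr (-d-1) * (d * (1 - (1 - t) powr e))"
      unfolding ode by (simp add: algebra_simps)
    finally show ?thesis using deriv by simp
  qed
  have mono: "\<psi> v \<le> \<psi> w" if v: "0 < v" "v < w" for v
  proof (rule DERIV_nonneg_imp_increasing_open[of v w \<psi>])
    fix x assume x: "v < x" "x < w"
    have "0 \<le> x powr (-d-1) * (d * (1 - (1 - x) powr e))"
      using assms x v by (intro mult_nonneg_nonneg) (auto intro!: powr_le1)
    then show "\<exists>y. (\<psi> has_real_derivative y) (at x) \<and> 0 \<le> y"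
      using \<psi>_deriv[of x] x v assms by auto
  next
    show "continuous_on {v..w} \<psi>"
      by (rule DERIV_continuous_on, rule has_field_derivative_at_within, rule \<psi>_deriv)
         (use assms v in auto)
  qed (use v in simp)
  have "(\<psi> \<longlongrightarrow> 0) (at_right 0)"
    unfolding \<psi>_def
  proof (rule vanishing_mult_powr_tendsto_0)
    show "hyp_fun d e 0 - 1 = 0" using hyp_fun_0 assms by simp
    show "((\<lambda>t. hyp_fun d e t - 1) has_field_derivative hyp_fun_deriv d e 0 - 0) (at 0)"
      by (intro DERIV_diff hyp_fun_has_derivative DERIV_const) (use assms in auto)
  qed (use assms in auto)
  then have "0 \<le> \<psi> w"
    by (rule tendsto_upperbound) (use mono assms in \<open>auto intro: eventually_at_rightI[where b=w]\<close>)
  then show ?thesis unfolding \<psi>_def using assms by (simp add: zero_le_mult_iff)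
qed

lemma hyp2f1_pfaff:
  assumes "0 < d" "d < 1" "z \<le> -1"
  shows "hyp2f1 (-d) b (1 - d) z = (1 - z) powr d * hyp_fun d (b + d - 1) (z / (z - 1))"
proof -
  have e: "1 - d - b = - (b + d - 1)" by simp
  have "hyp2f1 (-d) b (1 - d) z = (1 - z) powr d * hyp2f1_series (-d) (1 - d - b) (1 - d) (z / (z - 1))"
    unfolding hyp2f1_def using assms by simp
  then show ?thesis unfolding e hyp2f1_series_eq_hyp_fun[OF assms(1,2)] .
qed

section \<open>The incomplete Beta integral\<close>

definition beta_density :: "real \<Rightarrow> real \<Rightarrow> real" where
  "beta_density d t = t powr (-d) * (1 - t) powr (d - 1)"

text \<open>d times the incomplete Beta integral of beta_density d over [0,t].\<close>
definition inc_beta_form :: "real \<Rightarrow> real \<Rightarrow> real" where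
  "inc_beta_form d t = (hyp_fun d d t - (1 - t) powr d) * t powr (-d)"

lemma has_real_derivative_one_minus_powr:
  fixes t :: real
  assumes "t < 1"
  shows "((\<lambda>t. (1 - t) powr d) has_field_derivative (d * (1 - t) powr (d - 1) * (0 - 1))) (at t)"
proof -
  have "((\<lambda>t. 1 - t) has_real_derivative (0 - 1)) (at t)"
    by (intro DERIV_diff DERIV_const DERIV_ident)
  moreover have "1 - t > 0" using assms by simp
  ultimately show ?thesis using DERIV_chain2[OF has_real_derivative_powr] by blast
qed

lemma inc_beta_form_has_derivative:
  fixes t :: real
  assumes "0 < d" "d < 1" "0 < t" "t < 1"
  shows "(inc_beta_form d has_field_derivative d * beta_density d t) (at t)"
proof -
  have "(inc_beta_form d has_field_derivative
     (hyp_fun_deriv d d t - d * (1 - t) powr (d - 1) * (0 - 1)) * t powr (-d)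
       + (-d * t powr (-d-1)) * (hyp_fun d d t - (1 - t) powr d)) (at t)"
    unfolding inc_beta_form_def
    by (intro DERIV_mult DERIV_diff hyp_fun_has_derivative has_real_derivative_one_minus_powr
        has_real_derivative_powr[OF assms(3), of "-d"]) (use assms in auto)
  moreover have "(hyp_fun_deriv d d t - d * (1 - t) powr (d - 1) * (0 - 1)) * t powr (-d)
       + (-d * t powr (-d-1)) * (hyp_fun d d t - (1 - t) powr d) = d * beta_density d t"
  proof -
    define P where "P = t powr (-d-1)"
    define Q where "Q = (1 - t) powr (d - 1)"
    have tp: "t powr (-d) = t * P" unfolding P_def using assms by (simp add: powr_diff)
    have tq: "(1 - t) powr d = (1 - t) * Q" unfolding Q_def using assms by (simp add: powr_diff)
    have ode: "t * hyp_fun_deriv d d t = d * hyp_fun d d t - d * ((1 - t) * Q)"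
      using hyp_fun_ode[of d t d] assms tq by (simp add: algebra_simps)
    have "(hyp_fun_deriv d d t - d * Q * (0 - 1)) * (t * P) + (-d * P) * (hyp_fun d d t - (1 - t) * Q)
        = P * (t * hyp_fun_deriv d d t) + d * Q * t * P - d * P * hyp_fun d d t + d * P * (1 - t) * Q"
      by (simp add: algebra_simps)
    also have "\<dots> = d * ((t * P) * Q)" unfolding ode by (simp add: algebra_simps)
    finally show ?thesis
      unfolding beta_density_def tp tq Q_def[symmetric] P_def[symmetric] by simp
  qed
  ultimately show ?thesis by simp
qed

lemma inc_beta_form_tendsto_0:
  assumes "0 < d" "d < 1"
  shows "(inc_beta_form d \<longlongrightarrow> 0) (at_right 0)"
  unfolding inc_beta_form_def
proof (rule vanishing_mult_powr_tendsto_0)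
  show "hyp_fun d d 0 - (1 - 0) powr d = 0" using hyp_fun_0 assms by simp
  show "((\<lambda>t. hyp_fun d d t - (1 - t) powr d) has_field_derivative
          hyp_fun_deriv d d 0 - (d * (1 - 0) powr (d - 1) * (0 - 1))) (at 0)"
    by (intro DERIV_diff hyp_fun_has_derivative has_real_derivative_one_minus_powr) (use assms in auto)
qed (use assms in auto)

lemma inc_beta_form_has_integral:
  assumes "0 < d" "d < 1" "0 < v" "v < 1"
  shows "((\<lambda>t. d * beta_density d t) has_integral inc_beta_form d v) {0..v}"
proof -
  have "continuous_on {0..v} (inc_beta_form d)"
  proof (rule continuous_on_IccI)
    show "(inc_beta_form d \<longlongrightarrow> inc_beta_form d 0) (at_right 0)"
      using inc_beta_form_tendsto_0[OF assms(1,2)] by (simp add: inc_beta_form_def)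
    have "isCont (inc_beta_form d) v"
      by (rule DERIV_isCont, rule inc_beta_form_has_derivative) (use assms in auto)
    then show "(inc_beta_form d \<longlongrightarrow> inc_beta_form d v) (at_left v)"
      by (simp add: isCont_def filterlim_at_split)
    fix x :: real assume x: "0 < x" "x < v"
    have "isCont (inc_beta_form d) x"
      by (rule DERIV_isCont, rule inc_beta_form_has_derivative) (use assms x in auto)
    then show "inc_beta_form d \<midarrow>x\<rightarrow> inc_beta_form d x" by (simp add: isCont_def)
  qed (use assms in auto)
  then have "((\<lambda>t. d * beta_density d t) has_integral (inc_beta_form d v - inc_beta_form d 0))
               {0..v}"
  proof (rule fundamental_theorem_of_calculus_interior[rotated])
    fix x assume "x \<in> {0<..<v}"
    then show "(inc_beta_form d has_vector_derivative d * beta_density d x) (at x)"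
      unfolding has_real_derivative_iff_has_vector_derivative[symmetric]
      using assms by (intro inc_beta_form_has_derivative) auto
  qed (use assms in auto)
  then show ?thesis by (simp add: inc_beta_form_def)
qed

lemma mult_Beta_eq_Gamma_reflection:
  fixes d :: real
  assumes "0 < d"
  shows "d * Beta (1 - d) d = Gamma (1 - d) * Gamma (1 + d)"
proof -
  have "d \<notin> \<int>\<^sub>\<le>\<^sub>0"
  proof
    assume "d \<in> \<int>\<^sub>\<le>\<^sub>0"
    then have "d \<le> 0" by (auto elim!: nonpos_Ints_cases)
    then show False using assms by simp
  qed
  then have "Gamma (d + 1) = d * Gamma d" by (rule Gamma_plus1)
  then show ?thesis by (simp add: Beta_def add.commute)
qed

lemma inc_beta_form_tendsto_1:
  assumes "0 < d" "d < 1"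
  shows "(inc_beta_form d \<longlongrightarrow> Gamma (1 - d) * Gamma (1 + d)) (at_left 1)"
proof -
  have beta: "(beta_density d has_integral Beta (1 - d) d) {0..1}"
  proof -
    have "beta_density d = (\<lambda>t. t powr (-d) * (1 - t) powr (d - 1))"
      by (rule ext) (simp add: beta_density_def)
    then show ?thesis using has_integral_Beta_real[of "1 - d" d] assms by simp
  qed
  then have "continuous_on {0..1} (\<lambda>x. integral {0..x} (beta_density d))"
    by (intro indefinite_integral_continuous_1) blast
  then have "((\<lambda>x. integral {0..x} (beta_density d)) \<longlongrightarrow> integral {0..1} (beta_density d))
               (at_left 1)"
    by (rule continuous_on_Icc_at_leftD) simp
  then have "((\<lambda>x. d * integral {0..x} (beta_density d)) \<longlongrightarrow> d * Beta (1 - d) d) (at_left 1)"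
    unfolding integral_unique[OF beta] by (rule tendsto_mult_left)
  then have "((\<lambda>x. d * integral {0..x} (beta_density d))
               \<longlongrightarrow> Gamma (1 - d) * Gamma (1 + d)) (at_left 1)"
    using mult_Beta_eq_Gamma_reflection[OF assms(1)] by simp
  moreover have "\<forall>\<^sub>F x in at_left 1. d * integral {0..x} (beta_density d) = inc_beta_form d x"
  proof (rule eventually_at_leftI[where a=0])
    fix x :: real assume "x \<in> {0<..<1}"
    then have "((\<lambda>t. d * beta_density d t) has_integral inc_beta_form d x) {0..x}"
      using assms by (intro inc_beta_form_has_integral) auto
    then have "integral {0..x} (\<lambda>t. d * beta_density d t) = inc_beta_form d x"
      by (rule integral_unique)
    then show "d * integral {0..x} (beta_density d) = inc_beta_form d x" by simp
  qed simp
  ultimately show ?thesis by (rule Lim_transform_eventually)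
qed

lemma inc_beta_form_strict_mono:
  assumes "0 < d" "d < 1" "0 < a" "a < b" "b < 1"
  shows "inc_beta_form d a < inc_beta_form d b"
proof (rule DERIV_pos_imp_increasing_open[OF assms(4)])
  fix x assume "a < x" "x < b"
  then show "\<exists>y. (inc_beta_form d has_real_derivative y) (at x) \<and> 0 < y"
    using inc_beta_form_has_derivative[of d x] assms by (auto simp: beta_density_def)
next
  show "continuous_on {a..b} (inc_beta_form d)"
    by (rule DERIV_continuous_on, rule has_field_derivative_at_within,
        rule inc_beta_form_has_derivative) (use assms in auto)
qed

lemma inc_beta_form_less:
  assumes "0 < d" "d < 1" "0 < w" "w < 1"
  shows "inc_beta_form d w < Gamma (1 - d) * Gamma (1 + d)"
proof -
  define v where "v = (w + 1) / 2"
  have v: "w < v" "v < 1" using assms by (auto simp: v_def)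
  have "inc_beta_form d v \<le> Gamma (1 - d) * Gamma (1 + d)"
  proof (rule tendsto_lowerbound[OF inc_beta_form_tendsto_1[OF assms(1,2)]])
    show "\<forall>\<^sub>F i in at_left 1. inc_beta_form d v \<le> inc_beta_form d i"
      by (rule eventually_at_leftI[where a=v])
         (use assms v inc_beta_form_strict_mono[of d v] in \<open>auto intro: less_imp_le\<close>)
  qed simp
  moreover have "inc_beta_form d w < inc_beta_form d v"
    using inc_beta_form_strict_mono[of d w v] assms v by auto
  ultimately show ?thesis by simp
qed

text \<open>The auxiliary function \<eta> decreases on [w,1) because there t^(-d) < w^(-d),
  and it tends to \<Gamma>(1-d)\<Gamma>(1+d) at 1.\<close>
lemma Gamma_reflection_less_hyp_fun:
  assumes "0 < d" "d < 1" "0 < w" "w < 1"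
  shows "Gamma (1 - d) * Gamma (1 + d) < hyp_fun d d w * w powr (-d)"
proof -
  define \<eta> where "\<eta> t = inc_beta_form d t + w powr (-d) * (1 - t) powr d" for t
  have \<eta>_deriv: "(\<eta> has_real_derivative
      d * beta_density d x + w powr (-d) * (d * (1 - x) powr (d - 1) * (0 - 1))) (at x)"
    if "0 < x" "x < 1" for x
    unfolding \<eta>_def
    by (intro DERIV_add DERIV_cmult inc_beta_form_has_derivative has_real_derivative_one_minus_powr)
       (use assms that in auto)
  have decreasing: "\<eta> b < \<eta> a" if ab: "w \<le> a" "a < b" "b < 1" for a b
  proof (rule DERIV_neg_imp_decreasing_open[OF ab(2)])
    fix x assume x: "a < x" "x < b"
    have "x powr (-d) < w powr (-d)"
      using assms ab x by (intro powr_less_mono2_neg) auto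
    then have "d * (1 - x) powr (d - 1) * (x powr (-d) - w powr (-d)) < 0"
      using assms ab x by (intro mult_pos_neg) auto
    moreover have "d * beta_density d x + w powr (-d) * (d * (1 - x) powr (d - 1) * (0 - 1))
        = d * (1 - x) powr (d - 1) * (x powr (-d) - w powr (-d))"
      by (simp add: beta_density_def algebra_simps)
    ultimately show "\<exists>y. (\<eta> has_real_derivative y) (at x) \<and> y < 0"
      using \<eta>_deriv[of x] assms ab x by auto
  next
    show "continuous_on {a..b} \<eta>"
      by (rule DERIV_continuous_on, rule has_field_derivative_at_within, rule \<eta>_deriv)
         (use assms ab in auto)
  qed
  have "((\<lambda>t::real. 1 - t) \<longlongrightarrow> 1 - 1) (at_left 1)"
    by (intro tendsto_diff tendsto_const tendsto_ident_at)
  then have "((\<lambda>t. (1 - t) powr d) \<longlongrightarrow> 0) (at_left 1)"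
    by (intro tendsto_zero_powrI) (use assms in \<open>auto intro: eventually_at_leftI[where a=0]\<close>)
  then have lim: "(\<eta> \<longlongrightarrow> Gamma (1 - d) * Gamma (1 + d) + w powr (-d) * 0) (at_left 1)"
    unfolding \<eta>_def by (intro tendsto_add tendsto_mult tendsto_const inc_beta_form_tendsto_1 assms)
  define v where "v = (w + 1) / 2"
  have v: "w < v" "v < 1" using assms by (auto simp: v_def)
  have "Gamma (1 - d) * Gamma (1 + d) \<le> \<eta> v"
  proof (rule tendsto_upperbound[OF lim[simplified]])
    show "\<forall>\<^sub>F i in at_left 1. \<eta> i \<le> \<eta> v"
      by (rule eventually_at_leftI[where a=v]) (use v decreasing[of v] in \<open>auto intro: less_imp_le\<close>)
  qed simp
  also have "\<eta> v < \<eta> w" using decreasing[of w v] v by simp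
  also have "\<eta> w = hyp_fun d d w * w powr (-d)"
    unfolding \<eta>_def inc_beta_form_def by (simp add: algebra_simps)
  finally show ?thesis .
qed

section \<open>Bounds on the coefficients C1, C2, C3\<close>

lemma C3_add_1_bounds:
  assumes "\<alpha> > 2" "x \<ge> 1"
  shows "0 < C3 \<alpha> x + 1" "C3 \<alpha> x + 1 < 1"
proof -
  define d where "d = 2 / \<alpha>"
  have d: "0 < d" "d < 1" using assms by (auto simp: d_def field_simps)
  define G where "G = Gamma (1 - d) * Gamma (1 + d)"
  define w where "w = x / (1 + x)"
  define H where "H = hyp_fun d d w"
  define P where "P = x powr d"
  define Q where "Q = (1 + x) powr d"
  have w: "0 < w" "w < 1" using assms by (auto simp: w_def field_simps)
  have PQ: "P > 0" "Q > 0" using assms by (auto simp: P_def Q_def)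
  have "hyp2f1 (- 2 / \<alpha>) 1 (1 - 2 / \<alpha>) (- x) = (1 - - x) powr d * hyp_fun d (1 + d - 1) (- x / (- x - 1))"
    using hyp2f1_pfaff[OF d, of "- x" 1] assms by (simp add: d_def)
  also have "- x / (- x - 1) = w" unfolding w_def using assms by (simp add: field_simps)
  finally have "hyp2f1 (- 2 / \<alpha>) 1 (1 - 2 / \<alpha>) (- x) = Q * H"
    by (simp add: H_def Q_def)
  then have C: "C3 \<alpha> x + 1 = Q * H - G * P"
    unfolding C3_def C2_def G_def P_def d_def by simp
  have "w powr d = P / Q" unfolding w_def P_def Q_def using assms by (simp add: powr_divide)
  then have wp: "w powr (-d) = Q / P" using PQ by (simp add: powr_minus_divide)
  have "1 - w = 1 / (1 + x)" unfolding w_def using assms by (simp add: field_simps)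
  then have omw: "(1 - w) powr d = 1 / Q" unfolding Q_def using assms by (simp add: powr_divide)
  have "G < H * (Q / P)"
    using Gamma_reflection_less_hyp_fun[OF d w] unfolding G_def H_def wp .
  then have lower: "G * P < H * Q" using PQ by (simp add: field_simps)
  have "(H - 1 / Q) * (Q / P) < G"
    using inc_beta_form_less[OF d w] unfolding inc_beta_form_def G_def H_def wp omw .
  moreover have "(H - 1 / Q) * (Q / P) = (H * Q - 1) / P" using PQ by (simp add: field_simps)
  ultimately have upper: "H * Q - 1 < G * P" using PQ by (simp add: divide_less_eq)
  from lower upper show "0 < C3 \<alpha> x + 1" "C3 \<alpha> x + 1 < 1"
    unfolding C mult.commute[of Q H] by simp_all
qed

lemma C1_nonneg:
  assumes "\<alpha> > 2" "M1 \<ge> 1" "lam12 > 0" "P12 > 0" "B12 > 0" "x \<ge> real M1 * B12"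
  shows "0 \<le> C1 \<alpha> M1 lam12 P12 B12 x"
proof -
  define d where "d = 2 / \<alpha>"
  have d: "0 < d" "d < 1" using assms by (auto simp: d_def field_simps)
  define z where "z = - x / (real M1 * B12)"
  have z: "z \<le> -1" unfolding z_def using assms by (simp add: field_simps)
  then have w: "0 < z / (z - 1)" "z / (z - 1) < 1" by (auto simp: field_simps)
  have "1 \<le> hyp_fun d (real M1 + d - 1) (z / (z - 1))"
    by (rule hyp_fun_ge_1) (use d w assms in auto)
  then have "0 \<le> hyp2f1 (- d) (real M1) (1 - d) z"
    unfolding hyp2f1_pfaff[OF d z] by simp
  moreover have "- 2 / \<alpha> = - d" by (simp add: d_def)
  ultimately show ?thesis
    unfolding C1_def z_def[symmetric] using assms by (simp add: d_def)
qed

lemma C2_tendsto_at_top: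
  assumes "\<alpha> > 2"
  shows "filterlim (C2 \<alpha>) at_top at_top"
proof -
  have "0 < 2 / \<alpha>" "2 / \<alpha> < 1" using assms by (auto simp: field_simps)
  then have "0 < 1 - 2 / \<alpha>" "0 < 1 + 2 / \<alpha>" by linarith+
  then have "0 < Gamma (1 - 2 / \<alpha>) * Gamma (1 + 2 / \<alpha>)" by simp
  from filterlim_tendsto_pos_mult_at_top[OF tendsto_const this real_powr_at_top]
  show ?thesis unfolding C2_def[abs_def] using \<open>0 < 2 / \<alpha>\<close> by simp
qed

lemma offset_tendsto_at_top:
  assumes "\<alpha> > 2" "M1 \<ge> 1" "lam12 > 0" "P12 > 0" "B12 > 0"
  shows "\<forall>\<^sub>F x in at_top. 0 < C1 \<alpha> M1 lam12 P12 B12 x + C2 \<alpha> x \<and> 0 < C3 \<alpha> x + 1"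
    and "filterlim (\<lambda>x. (C1 \<alpha> M1 lam12 P12 B12 x + C2 \<alpha> x) / (C3 \<alpha> x + 1)) at_top at_top"
proof -
  let ?A = "\<lambda>x. C1 \<alpha> M1 lam12 P12 B12 x + C2 \<alpha> x"
  have ev: "\<forall>\<^sub>F x in at_top. C2 \<alpha> x \<le> ?A x / (C3 \<alpha> x + 1) \<and> 0 < ?A x \<and> 0 < C3 \<alpha> x + 1"
    using eventually_ge_at_top[of "max 1 (real M1 * B12)"]
      filterlim_at_top_dense[THEN iffD1, OF C2_tendsto_at_top[OF assms(1)], rule_format, of 0]
  proof eventually_elim
    case (elim x)
    have D: "0 < C3 \<alpha> x + 1" "C3 \<alpha> x + 1 < 1" using C3_add_1_bounds[OF assms(1)] elim by auto
    have "C2 \<alpha> x \<le> ?A x" using C1_nonneg[OF assms, of x] elim by simp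
    moreover have "?A x \<le> ?A x / (C3 \<alpha> x + 1)"
      using D elim calculation by (simp add: le_divide_eq)
    ultimately show ?case using D elim by linarith
  qed
  then show "\<forall>\<^sub>F x in at_top. 0 < ?A x \<and> 0 < C3 \<alpha> x + 1"
    by eventually_elim simp
  show "filterlim (\<lambda>x. ?A x / (C3 \<alpha> x + 1)) at_top at_top"
    by (rule filterlim_at_top_mono[OF C2_tendsto_at_top[OF assms(1)]])
       (use ev in \<open>eventually_elim, simp\<close>)
qed

section \<open>Saturation of the clipped solution\<close>

text \<open>Two fractional levels f < g would need s (r f - r g) < 1 and s r g > K, which together
  with r g \<le> K (r f - r g) is impossible.\<close>
lemma clipped_levels_saturate:
  fixes q r :: "nat \<Rightarrow> real" and s K :: real and Nf Nc :: nat
  assumes s: "s > 0"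
    and r_antimono: "\<And>f g. 1 \<le> f \<Longrightarrow> f < g \<Longrightarrow> g \<le> Nf \<Longrightarrow> r g \<le> r f"
    and r_pos: "\<And>f. 1 \<le> f \<Longrightarrow> f \<le> Nf \<Longrightarrow> r f > 0"
    and sep: "\<And>f g. 1 \<le> f \<Longrightarrow> f < g \<Longrightarrow> g \<le> Nf \<Longrightarrow> r g \<le> K * (r f - r g)"
    and q: "\<And>f. q f = clip01 (s * r f - K)"
    and sum: "(\<Sum>f = 1..Nf. q f) = real Nc" and "Nc \<le> Nf"
  shows "(\<forall>f\<in>{1..Nc}. q f = 1) \<and> (\<forall>f\<in>{Nc+1..Nf}. q f = 0)"
proof -
  have q01: "0 \<le> q f" "q f \<le> 1" for f unfolding q clip01_def by auto
  have q_antimono: "q g \<le> q f" if "1 \<le> f" "f \<le> g" "g \<le> Nf" for f g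
  proof (cases "f = g")
    case False
    then have "s * r g - K \<le> s * r f - K" using r_antimono that s by (simp add: mult_left_mono)
    then show ?thesis unfolding q clip01_def by (simp add: max_def min_def)
  qed simp
  have frac: "q f = s * r f - K" if "0 < q f" "q f < 1" for f
    using that unfolding q clip01_def by (auto simp: max_def min_def split: if_splits)
  have one_fractional: "\<not> (0 < q f \<and> q f < 1 \<and> 0 < q g \<and> q g < 1)"
    if fg: "1 \<le> f" "f < g" "g \<le> Nf" for f g
  proof
    assume qfg: "0 < q f \<and> q f < 1 \<and> 0 < q g \<and> q g < 1"
    have "K * r f < s * r g * r f" using frac[of g] qfg r_pos fg by simp
    moreover have "s * r f * r g < (K + 1) * r g" using frac[of f] qfg r_pos fg by simp
    ultimately show False using sep[OF fg] by (simp add: algebra_simps)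
  qed
  have ones: "q f = 1" if f: "f \<in> {1..Nc}" for f
  proof (rule ccontr)
    assume "q f \<noteq> 1"
    then have qf1: "q f < 1" using q01[of f] by simp
    define T where "T = {f..Nf}"
    have frac_T: "0 < q g \<and> q g < 1" if "g \<in> T" "q g \<noteq> 0" for g
      using that q01[of g] q_antimono[of f g] qf1 f \<open>Nc \<le> Nf\<close> by (auto simp: T_def)
    have tail: "(\<Sum>g\<in>T. q g) < 1"
    proof (cases "\<forall>g\<in>T. q g = 0")
      case False
      then obtain g0 where g0: "g0 \<in> T" "q g0 \<noteq> 0" by blast
      have "q g = 0" if g: "g \<in> T - {g0}" for g
      proof (rule ccontr)
        assume "q g \<noteq> 0"
        then have "0 < q g \<and> q g < 1" "0 < q g0 \<and> q g0 < 1" using frac_T g g0 by auto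
        then show False
          using one_fractional[of g g0] one_fractional[of g0 g] g g0 f
          by (cases "g < g0") (auto simp: T_def)
      qed
      then have "(\<Sum>g\<in>T. q g) = q g0"
        using g0 by (simp add: T_def sum.remove)
      then show ?thesis using frac_T g0 by simp
    qed simp
    have "{1..Nf} = {1..<f} \<union> T" using f \<open>Nc \<le> Nf\<close> by (auto simp: T_def)
    then have "(\<Sum>g = 1..Nf. q g) = (\<Sum>g\<in>{1..<f}. q g) + (\<Sum>g\<in>T. q g)"
      by (simp add: sum.union_disjoint T_def ivl_disj_int)
    also have "\<dots> < real (f - 1) + 1"
      using sum_bounded_above[of "{1..<f}" q 1] q01 tail by simp
    also have "\<dots> \<le> real Nc" using f by simp
    finally show False using sum by simp
  qed
  have "{1..Nf} = {1..Nc} \<union> {Nc+1..Nf}" using \<open>Nc \<le> Nf\<close> by auto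
  then have "(\<Sum>g\<in>{Nc+1..Nf}. q g) = 0"
    using sum ones by (simp add: sum.union_disjoint)
  then show ?thesis
    using ones sum_nonneg_eq_0_iff[of "{Nc+1..Nf}" q] q01 by simp
qed

lemma zipf_pos:
  assumes "1 \<le> f" "1 \<le> Nf"
  shows "0 < zipf Nf \<delta> f"
  unfolding zipf_def using assms by (auto intro!: divide_pos_pos sum_pos)

lemma zipf_strict_antimono:
  assumes "\<delta> > 0" "1 \<le> f" "f < g" "1 \<le> Nf"
  shows "zipf Nf \<delta> g < zipf Nf \<delta> f"
proof -
  have "0 < (\<Sum>n = 1..Nf. real n powr (- \<delta>))" by (rule sum_pos) (use assms in auto)
  moreover have "real g powr (- \<delta>) < real f powr (- \<delta>)"
    by (rule powr_less_mono2_neg) (use assms in auto)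
  ultimately show ?thesis unfolding zipf_def by (simp add: divide_strict_right_mono)
qed

lemma qlow_eventually_saturated:
  assumes "Nc \<le> Nf" "\<delta> > 0" "\<alpha> > 2" "M1 \<ge> 1" "lam12 > 0" "P12 > 0" "B12 > 0"
    and nu: "\<And>x. x > 0 \<Longrightarrow> \<nu> x > 0 \<and>
        (\<Sum>f = 1..Nf. qlow Nf \<delta> \<alpha> M1 lam12 P12 B12 x (\<nu> x) f) = real Nc"
  shows "\<forall>\<^sub>F x in at_top. (\<forall>f\<in>{1..Nc}. qlow Nf \<delta> \<alpha> M1 lam12 P12 B12 x (\<nu> x) f = 1)
     \<and> (\<forall>f\<in>{Nc+1..Nf}. qlow Nf \<delta> \<alpha> M1 lam12 P12 B12 x (\<nu> x) f = 0)"
proof -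
  define r where "r f = sqrt (zipf Nf \<delta> f)" for f
  define A where "A x = C1 \<alpha> M1 lam12 P12 B12 x + C2 \<alpha> x" for x
  define D where "D x = C3 \<alpha> x + 1" for x
  have r_pos: "r f > 0" if "1 \<le> f" "f \<le> Nf" for f
    unfolding r_def using zipf_pos that by simp
  have r_less: "r g < r f" if "1 \<le> f" "f < g" "g \<le> Nf" for f g
    unfolding r_def using zipf_strict_antimono[OF assms(2)] that by simp
  define pairs where "pairs = {(f, g). 1 \<le> f \<and> f < g \<and> g \<le> Nf}"
  have "finite pairs"
    by (rule finite_subset[of _ "{1..Nf} \<times> {1..Nf}"]) (auto simp: pairs_def)
  then have "\<forall>\<^sub>F x in at_top. \<forall>(f, g)\<in>pairs. r g / (r f - r g) \<le> A x / D x"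
    using offset_tendsto_at_top(2)[OF assms(3-7)]
    by (auto simp: A_def D_def filterlim_at_top intro!: eventually_ball_finite)
  moreover have "\<forall>\<^sub>F x in at_top. 0 < x \<and> 0 < A x \<and> 0 < D x"
    using offset_tendsto_at_top(1)[OF assms(3-7)] eventually_gt_at_top[of 0]
    by eventually_elim (simp add: A_def D_def)
  ultimately show ?thesis
  proof eventually_elim
    case (elim x)
    have "\<nu> x > 0" and "(\<Sum>f = 1..Nf. qlow Nf \<delta> \<alpha> M1 lam12 P12 B12 x (\<nu> x) f) = real Nc"
      using nu[of x] elim by auto
    moreover have "r g \<le> A x / D x * (r f - r g)" if "1 \<le> f" "f < g" "g \<le> Nf" for f g
      using elim r_less[OF that] that by (fastforce simp: pairs_def pos_divide_le_eq mult.commute)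
    ultimately show ?case
      using elim r_less r_pos assms(1)
      by (intro clipped_levels_saturate[where s="sqrt (A x) / (sqrt (\<nu> x) * D x)"
            and r=r and K="A x / D x"])
         (auto simp: qlow_def Let_def r_def A_def D_def less_imp_le)
  qed
qed

lemma saturation_tendsto:
  assumes "\<forall>\<^sub>F x in at_top. (\<forall>f\<in>I. q x f = 1) \<and> (\<forall>f\<in>J. q x f = (0::real))"
    and "filterlim g at_top F"
  shows "(\<forall>f\<in>I. ((\<lambda>t. q (g t) f) \<longlongrightarrow> 1) F) \<and> (\<forall>f\<in>J. ((\<lambda>t. q (g t) f) \<longlongrightarrow> 0) F)"
  using eventually_compose_filterlim[OF assms]
  by (auto intro!: tendsto_eventually elim: eventually_mono)

section \<open>The SINR threshold\<close>

lemma gbar_ge_linear: "R0 / W * (1 + 1.28 * \<rho> * Po) * ln 2 \<le> gbar W Po R0 \<rho>"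
proof -
  define y where "y = R0 / W * (1 + 1.28 * \<rho> * Po)"
  have "gbar W Po R0 \<rho> = exp (y * ln 2) - 1" unfolding gbar_def powr_def y_def by simp
  moreover have "1 + y * ln 2 \<le> exp (y * ln 2)" by (rule exp_ge_add_one_self)
  ultimately show ?thesis unfolding y_def[symmetric] by linarith
qed

lemma filterlim_gbar_R0:
  assumes "W > 0" "Po > 0" "\<rho> > 0"
  shows "filterlim (\<lambda>R0. gbar W Po R0 \<rho>) at_top at_top"
proof (rule filterlim_at_top_mono[OF filterlim_tendsto_pos_mult_at_top[OF tendsto_const _
        filterlim_ident]])
  show "0 < (1 + 1.28 * \<rho> * Po) / W * ln 2" using assms
    by (auto intro!: mult_pos_pos divide_pos_pos add_pos_pos)
  show "\<forall>\<^sub>F R0 in at_top. (1 + 1.28 * \<rho> * Po) / W * ln 2 * R0 \<le> gbar W Po R0 \<rho>"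
    by (intro always_eventually allI order_trans[OF _ gbar_ge_linear]) (simp add: field_simps)
qed

lemma filterlim_gbar_rho:
  assumes "W > 0" "Po > 0" "R0 > 0"
  shows "filterlim (\<lambda>\<rho>. gbar W Po R0 \<rho>) at_top at_top"
proof (rule filterlim_at_top_mono[OF filterlim_tendsto_pos_mult_at_top[OF tendsto_const _
        filterlim_ident]])
  show "0 < R0 / W * 1.28 * Po * ln 2" using assms by simp
  show "\<forall>\<^sub>F \<rho> in at_top. R0 / W * 1.28 * Po * ln 2 * \<rho> \<le> gbar W Po R0 \<rho>"
    using assms by (intro always_eventually allI order_trans[OF _ gbar_ge_linear])
      (simp add: algebra_simps)
qed

theorem corollary2:
  fixes Nc Nf M1 :: nat
    and \<delta> \<alpha> lam12 P12 B12 W Po :: real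
    and \<nu> :: "real \<Rightarrow> real"
  assumes "1 \<le> Nc" and "Nc \<le> Nf"
    and "\<delta> > 0" and "\<alpha> > 2" and "M1 \<ge> 1"
    and "lam12 > 0" and "P12 > 0" and "B12 > 0"
    and "W > 0" and "Po > 0"
    and nu: "\<And>x. x > 0 \<Longrightarrow> \<nu> x > 0 \<and>
        (\<Sum>f = 1..Nf. qlow Nf \<delta> \<alpha> M1 lam12 P12 B12 x (\<nu> x) f) = real Nc"
  shows
    "(\<forall>\<rho> > 0. (\<forall>f \<in> {1..Nc}.
         ((\<lambda>R0. qlow Nf \<delta> \<alpha> M1 lam12 P12 B12 (gbar W Po R0 \<rho>) (\<nu> (gbar W Po R0 \<rho>)) f)
            \<longlongrightarrow> 1) at_top) \<and>
       (\<forall>f \<in> {Nc+1..Nf}.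
         ((\<lambda>R0. qlow Nf \<delta> \<alpha> M1 lam12 P12 B12 (gbar W Po R0 \<rho>) (\<nu> (gbar W Po R0 \<rho>)) f)
            \<longlongrightarrow> 0) at_top)) \<and>
     (\<forall>R0 > 0. (\<forall>f \<in> {1..Nc}.
         ((\<lambda>\<rho>. qlow Nf \<delta> \<alpha> M1 lam12 P12 B12 (gbar W Po R0 \<rho>) (\<nu> (gbar W Po R0 \<rho>)) f)
            \<longlongrightarrow> 1) at_top) \<and>
       (\<forall>f \<in> {Nc+1..Nf}.
         ((\<lambda>\<rho>. qlow Nf \<delta> \<alpha> M1 lam12 P12 B12 (gbar W Po R0 \<rho>) (\<nu> (gbar W Po R0 \<rho>)) f)
            \<longlongrightarrow> 0) at_top))"
proof -
  have saturated: "\<forall>\<^sub>F x in at_top.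
      (\<forall>f\<in>{1..Nc}. qlow Nf \<delta> \<alpha> M1 lam12 P12 B12 x (\<nu> x) f = 1) \<and>
      (\<forall>f\<in>{Nc+1..Nf}. qlow Nf \<delta> \<alpha> M1 lam12 P12 B12 x (\<nu> x) f = 0)"
    by (rule qlow_eventually_saturated[OF assms(2-8) nu])
  show ?thesis
    using saturation_tendsto[OF saturated filterlim_gbar_R0[OF assms(9,10)]]
      saturation_tendsto[OF saturated filterlim_gbar_rho[OF assms(9,10)]]
    by blast
qed

end
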